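(* Let $T>0$, $n_0>0$, and let $X(t)$ be a zero-mean Gaussian process on $[0,T]$ whose autocorrelation $R_X(t_1,t_2)=\mathbb{E}[X(t_1)X(t_2)]$ is a continuous, symmetric, positive-definite kernel on $[0,T]^2$, with Mercer expansion on $[0,T]$ given by eigenpairs $(\lambda_k,\phi_k)_{k\ge 1}$, i.e. $\lambda_k\phi_k(t_1)=\int_0^T R_X(t_1,t_2)\phi_k(t_2)\,\mathrm{d}t_2$ for all $k\ge1$, with $\int_0^T\phi_i(t)\phi_j(t)\,\mathrm{d}t=\delta_{ij}$. Let $Y(t)=X(t)+N(t)$, where $N(t)$ is additive white Gaussian noise of power spectral density $n_0/2$, independent of $X$. Then the finite-time mutual information $I(T)$ between $X$ and $Y$ within the observation window $[0,T]$ is $$I(T)=\frac12\sum_{k=1}^{\infty}\log\left(1+\frac{\lambda_k}{n_0/2}\right).$$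
   Context: The finite-time mutual information is defined by sampling: for $n\ge1$ take sampling instants $t_i=(i-1)T/n$, $1\le i\le n$, and let $I(t_1^n)=I(\boldsymbol X(t_1^n);\boldsymbol Y(t_1^n))$ be the mutual information between the sample vectors $(X(t_1),\dots,X(t_n))$ and $(Y(t_1),\dots,Y(t_n))$; then $I(T)=\lim_{n\to\infty}I(t_1^n)$. Since white noise has infinite pointwise power, its samples are taken after passing $N(t)$ through a rectangular filter of width $T/n$ and gain $n/T$, so that the noise samples are i.i.d. zero-mean Gaussian with variance $\frac{n_0}{2}\cdot\frac{n}{T}$, independent of $X$. Thus $I(t_1^n)=\frac12\log\det\big(\mathbf I_n+\frac{2T}{n n_0}\mathbf K_X\big)$ with $(\mathbf K_X)_{ij}=R_X(t_i,t_j)$. Logarithms are natural (information in nats). *)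

theory Defs
  imports "HOL-Analysis.Analysis" "Jordan_Normal_Form.Determinant"
begin

text \<open>Sampling instants: the (i+1)-th instant t_(i+1) = i T / n, for i = 0, ..., n-1.\<close>
definition sample_time :: "real \<Rightarrow> nat \<Rightarrow> nat \<Rightarrow> real" where
  "sample_time T n i = real i * T / real n"

definition sample_cov :: "(real \<Rightarrow> real \<Rightarrow> real) \<Rightarrow> real \<Rightarrow> nat \<Rightarrow> real mat" where
  "sample_cov R T n = mat n n (\<lambda>(i, j). R (sample_time T n i) (sample_time T n j))"

definition sampled_MI :: "(real \<Rightarrow> real \<Rightarrow> real) \<Rightarrow> real \<Rightarrow> real \<Rightarrow> nat \<Rightarrow> real" where
  "sampled_MI R T n0 n =
     1/2 * ln (det (1\<^sub>m n + (2 * T / (real n * n0)) \<cdot>\<^sub>m sample_cov R T n))"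

end

(*
  With a = 2T/(n n0), the sampled mutual information is (1/2) ln det (1 + a K), K the covariance
  matrix of the samples. By Mercer's expansion 1 + a K = 1 + sum_k u_k u_k' with
  u_k = (sqrt (a lam_k) phi_k(t_i))_i. Every partial sum of this series dominates the identity, so by
  the matrix determinant lemma each further rank-one term multiplies the determinant by a factor
  between 1 and exp |u_k|^2: truncating after N terms loses at most the trace of the tail, a Riemann
  sum of R(s,s) - sum_{k<N} lam_k phi_k(s)^2, which tends to (2/n0) (int R(s,s) ds - sum_{k<N} lam_k)
  as n grows. By Sylvester's identity the truncated determinant is det (1 + G) for the N x N Gram
  matrix G of the u_k, whose entries are Riemann sums converging to (2/n0) lam_k delta_kl by
  orthonormality. Letting first n and then N tend to infinity, with sum_k lam_k = int R(s,s) ds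
  (monotone convergence) and lam_k >= 0 (positive definiteness, through double Riemann sums), yields
  the limit sum_k ln (1 + 2 lam_k / n0).
*)
theory Submission
  imports Defs
begin

section \<open>Determinants of rank-one updates\<close>

lemma det_one_plus_mult_commute:
  fixes U W :: "'a::idom mat"
  assumes U: "U \<in> carrier_mat n m" and W: "W \<in> carrier_mat m n"
  shows "det (1\<^sub>m n + U * W) = det (1\<^sub>m m + W * U)"
proof -
  let ?M = "four_block_mat (1\<^sub>m n) (- U) W (1\<^sub>m m)"
  have WU: "W * U \<in> carrier_mat m m" and UW: "U * W \<in> carrier_mat n n"
    using U W by auto
  have lower: "?M = four_block_mat (1\<^sub>m n) (0\<^sub>m n m) W (1\<^sub>m m) *
             four_block_mat (1\<^sub>m n) (- U) (0\<^sub>m m n) (1\<^sub>m m + W * U)"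
  proof -
    have "W * (- U) + 1\<^sub>m m * (1\<^sub>m m + W * U) = 1\<^sub>m m"
      using U W WU by (simp add: mult_minus_distrib_mat[symmetric]) (rule eq_matI, insert WU, auto)
    then show ?thesis
      using U W by (subst mult_four_block_mat) auto
  qed
  have upper: "?M = four_block_mat (1\<^sub>m n + U * W) (- U) (0\<^sub>m m n) (1\<^sub>m m) *
                      four_block_mat (1\<^sub>m n) (0\<^sub>m n m) W (1\<^sub>m m)"
  proof -
    have "(1\<^sub>m n + U * W) * 1\<^sub>m n + (- U) * W = 1\<^sub>m n"
      using U W UW by simp (rule eq_matI, insert UW U W, auto)
    then show ?thesis
      using U W UW by (subst mult_four_block_mat) auto
  qed
  have "det ?M = det (1\<^sub>m m + W * U)"
    unfolding lower using U W WU
    by (subst det_mult[of _ "n+m"])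
      (auto simp: det_four_block_mat_upper_right_zero[of _ n _ m]
        det_four_block_mat_lower_left_zero[of _ n _ m])
  moreover have "det ?M = det (1\<^sub>m n + U * W)"
    unfolding upper using U W UW
    by (subst det_mult[of _ "n+m"])
      (auto simp: det_four_block_mat_upper_right_zero[of _ n _ m]
        det_four_block_mat_lower_left_zero[of _ n _ m])
  ultimately show ?thesis by simp
qed

definition outer_mat :: "nat \<Rightarrow> (nat \<Rightarrow> 'a::times) \<Rightarrow> 'a mat" where
  "outer_mat n w = mat n n (\<lambda>(i, j). w i * w j)"

definition loewner_ge_one :: "nat \<Rightarrow> real mat \<Rightarrow> bool" where
  "loewner_ge_one n Q \<longleftrightarrow> Q \<in> carrier_mat n n \<and>
     (\<forall>y. (\<Sum>i=0..<n. (y i)\<^sup>2) \<le> (\<Sum>i=0..<n. \<Sum>j=0..<n. y i * Q $$ (i, j) * y j))"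

lemma loewner_ge_one_one_mat: "loewner_ge_one n (1\<^sub>m n)"
  unfolding loewner_ge_one_def
proof (intro conjI allI)
  fix y :: "nat \<Rightarrow> real"
  have "(\<Sum>i=0..<n. \<Sum>j=0..<n. y i * 1\<^sub>m n $$ (i, j) * y j)
      = (\<Sum>i=0..<n. \<Sum>j=0..<n. if i = j then (y i)\<^sup>2 else 0)"
    by (intro sum.cong refl) (auto simp: power2_eq_square)
  then show "(\<Sum>i=0..<n. (y i)\<^sup>2) \<le> (\<Sum>i=0..<n. \<Sum>j=0..<n. y i * 1\<^sub>m n $$ (i, j) * y j)"
    by simp
qed simp

lemma loewner_ge_one_add_outer_mat:
  assumes "loewner_ge_one n Q"
  shows "loewner_ge_one n (Q + outer_mat n w)"
  unfolding loewner_ge_one_def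
proof (intro conjI allI)
  have Q: "Q \<in> carrier_mat n n" using assms loewner_ge_one_def by auto
  then show "Q + outer_mat n w \<in> carrier_mat n n" by (simp add: outer_mat_def)
  fix y :: "nat \<Rightarrow> real"
  have "(\<Sum>i=0..<n. \<Sum>j=0..<n. y i * (Q + outer_mat n w) $$ (i, j) * y j)
      = (\<Sum>i=0..<n. \<Sum>j=0..<n. y i * Q $$ (i, j) * y j) + (\<Sum>i=0..<n. y i * w i)\<^sup>2"
    using Q by (simp add: outer_mat_def algebra_simps power2_eq_square sum_product sum.distrib)
  moreover have "(\<Sum>i=0..<n. (y i)\<^sup>2) \<le> (\<Sum>i=0..<n. \<Sum>j=0..<n. y i * Q $$ (i, j) * y j)"
    using assms loewner_ge_one_def by auto
  ultimately show "(\<Sum>i=0..<n. (y i)\<^sup>2) \<le> (\<Sum>i=0..<n. \<Sum>j=0..<n. y i * (Q + outer_mat n w) $$ (i, j) * y j)"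
    by (smt (verit) zero_le_power2)
qed

lemma loewner_ge_one_det_nonzero:
  assumes "loewner_ge_one n Q"
  shows "det Q \<noteq> 0"
proof
  assume "det Q = 0"
  have Q: "Q \<in> carrier_mat n n" using assms loewner_ge_one_def by auto
  obtain v where v: "v \<in> carrier_vec n" "v \<noteq> 0\<^sub>v n" "Q *\<^sub>v v = 0\<^sub>v n"
    using \<open>det Q = 0\<close> det_0_iff_vec_prod_zero[OF Q] by auto
  define y where "y = vec_index v"
  have row: "(\<Sum>j=0..<n. Q $$ (i, j) * y j) = 0" if "i < n" for i
    using arg_cong[OF v(3), of "\<lambda>x. vec_index x i"] Q v(1) that
    by (simp add: y_def scalar_prod_def)
  have "(\<Sum>i=0..<n. (y i)\<^sup>2) \<le> (\<Sum>i=0..<n. \<Sum>j=0..<n. y i * Q $$ (i, j) * y j)"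
    using assms loewner_ge_one_def by auto
  also have "\<dots> = (\<Sum>i=0..<n. y i * (\<Sum>j=0..<n. Q $$ (i, j) * y j))"
    by (simp add: sum_distrib_left mult.assoc)
  also have "\<dots> = 0" using row by simp
  finally have "(\<Sum>i=0..<n. (y i)\<^sup>2) \<le> 0" .
  then have "\<forall>i\<in>{0..<n}. (y i)\<^sup>2 = 0"
    using sum_nonneg_eq_0_iff[of "{0..<n}" "\<lambda>i. (y i)\<^sup>2"] by (simp add: order_antisym sum_nonneg)
  then have "v = 0\<^sub>v n" using v(1) by (intro eq_vecI) (auto simp: y_def)
  with v(2) show False by simp
qed

lemma loewner_ge_one_solvable:
  assumes "loewner_ge_one n Q"
  obtains y where "\<And>i. i < n \<Longrightarrow> (\<Sum>j=0..<n. Q $$ (i, j) * y j) = w i"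
proof -
  have Q: "Q \<in> carrier_mat n n" using assms loewner_ge_one_def by auto
  have "Q \<in> Units (ring_mat TYPE(real) n undefined)"
    by (rule det_non_zero_imp_unit[OF Q loewner_ge_one_det_nonzero[OF assms]])
  then obtain Qi where Qi: "Qi \<in> carrier_mat n n" "Q * Qi = 1\<^sub>m n"
    unfolding Units_def ring_mat_simps by auto
  define y where "y j = (\<Sum>k=0..<n. Qi $$ (j, k) * w k)" for j
  have "(\<Sum>j=0..<n. Q $$ (i, j) * y j) = w i" if i: "i < n" for i
  proof -
    have "(\<Sum>j=0..<n. Q $$ (i, j) * y j) = (\<Sum>j=0..<n. \<Sum>k=0..<n. Q $$ (i, j) * Qi $$ (j, k) * w k)"
      unfolding y_def by (simp add: sum_distrib_left mult.assoc)
    also have "\<dots> = (\<Sum>k=0..<n. (\<Sum>j=0..<n. Q $$ (i, j) * Qi $$ (j, k)) * w k)"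
      by (subst sum.swap) (simp add: sum_distrib_right)
    also have "\<dots> = (\<Sum>k=0..<n. (Q * Qi) $$ (i, k) * w k)"
      using Q Qi(1) i by (intro sum.cong refl) (simp add: scalar_prod_def)
    also have "\<dots> = (\<Sum>k=0..<n. if i = k then w k else 0)"
      using i by (intro sum.cong refl) (simp add: Qi(2))
    also have "\<dots> = w i" using i by simp
    finally show ?thesis .
  qed
  then show ?thesis by (rule that)
qed

text \<open>With Q y = w, the hypothesis Q \<ge> 1 gives |y|^2 \<le> y' Q y = w' y, and then
  0 \<le> |w - y|^2 \<le> |w|^2 - w' y.\<close>
lemma loewner_ge_one_inverse_form_bounds:
  assumes ge: "loewner_ge_one n Q"
    and Qy: "\<And>i. i < n \<Longrightarrow> (\<Sum>j=0..<n. Q $$ (i, j) * y j) = w i"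
  shows "0 \<le> (\<Sum>i=0..<n. w i * y i)" and "(\<Sum>i=0..<n. w i * y i) \<le> (\<Sum>i=0..<n. (w i)\<^sup>2)"
proof -
  let ?q = "\<Sum>i=0..<n. w i * y i"
  have "(\<Sum>i=0..<n. (y i)\<^sup>2) \<le> (\<Sum>i=0..<n. \<Sum>j=0..<n. y i * Q $$ (i, j) * y j)"
    using ge loewner_ge_one_def by auto
  also have "\<dots> = (\<Sum>i=0..<n. y i * (\<Sum>j=0..<n. Q $$ (i, j) * y j))"
    by (simp add: sum_distrib_left mult.assoc)
  also have "\<dots> = ?q" using Qy by (simp add: mult.commute)
  finally have yq: "(\<Sum>i=0..<n. (y i)\<^sup>2) \<le> ?q" .
  then show "0 \<le> ?q" using sum_nonneg[of "{0..<n}" "\<lambda>i. (y i)\<^sup>2"] by auto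
  have "0 \<le> (\<Sum>i=0..<n. (w i - y i)\<^sup>2)" by (intro sum_nonneg) auto
  also have "\<dots> = (\<Sum>i=0..<n. (w i)\<^sup>2) - 2 * ?q + (\<Sum>i=0..<n. (y i)\<^sup>2)"
    by (simp add: power2_diff sum.distrib sum_subtractf sum_distrib_left mult.assoc)
  finally show "?q \<le> (\<Sum>i=0..<n. (w i)\<^sup>2)" using yq by linarith
qed

text \<open>Matrix determinant lemma: q = w' Q^-1 w.\<close>
lemma det_add_outer_mat:
  assumes ge: "loewner_ge_one n Q"
  obtains q where "0 \<le> q" "q \<le> (\<Sum>i=0..<n. (w i)\<^sup>2)" "det (Q + outer_mat n w) = det Q * (1 + q)"
proof -
  have Q: "Q \<in> carrier_mat n n" using ge loewner_ge_one_def by auto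
  obtain y where Qy: "\<And>i. i < n \<Longrightarrow> (\<Sum>j=0..<n. Q $$ (i, j) * y j) = w i"
    using loewner_ge_one_solvable[OF ge] by blast
  define U where "U = mat n 1 (\<lambda>(i, _). y i)"
  define W where "W = mat 1 n (\<lambda>(_, j). w j)"
  have U: "U \<in> carrier_mat n 1" and W: "W \<in> carrier_mat 1 n" by (auto simp: U_def W_def)
  have "Q * U = mat n 1 (\<lambda>(i, _). w i)"
    using Q Qy by (intro eq_matI) (auto simp: U_def scalar_prod_def)
  then have "Q * (U * W) = outer_mat n w"
    using Q U W by (subst assoc_mult_mat[symmetric, of _ n n _ 1])
      (auto simp: W_def outer_mat_def scalar_prod_def)
  moreover have "Q * (1\<^sub>m n + U * W) = Q * 1\<^sub>m n + Q * (U * W)"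
    using Q U W by (intro mult_add_distrib_mat) auto
  ultimately have "Q + outer_mat n w = Q * (1\<^sub>m n + U * W)"
    using Q by simp
  then have "det (Q + outer_mat n w) = det Q * det (1\<^sub>m 1 + W * U)"
    using Q U W by (simp add: det_mult[OF Q] det_one_plus_mult_commute[OF U W])
  also have "1\<^sub>m 1 + W * U = mat 1 1 (\<lambda>_. 1 + (\<Sum>i=0..<n. w i * y i))"
    by (intro eq_matI) (auto simp: W_def U_def scalar_prod_def)
  finally have "det (Q + outer_mat n w) = det Q * (1 + (\<Sum>i=0..<n. w i * y i))"
    by (simp add: det_single)
  with loewner_ge_one_inverse_form_bounds[OF ge Qy] show ?thesis by (rule that)
qed

fun id_plus_outers :: "nat \<Rightarrow> (nat \<Rightarrow> nat \<Rightarrow> real) \<Rightarrow> nat \<Rightarrow> real mat" where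
  "id_plus_outers n u 0 = 1\<^sub>m n"
| "id_plus_outers n u (Suc M) = id_plus_outers n u M + outer_mat n (u M)"

lemma id_plus_outers_carrier: "id_plus_outers n u M \<in> carrier_mat n n"
  by (induction M) (auto simp: outer_mat_def)

lemma index_id_plus_outers:
  assumes "i < n" "j < n"
  shows "id_plus_outers n u M $$ (i, j) = (if i = j then 1 else 0) + (\<Sum>k<M. u k i * u k j)"
  using assms id_plus_outers_carrier[of n u] by (induction M) (auto simp: outer_mat_def)

lemma loewner_ge_one_id_plus_outers: "loewner_ge_one n (id_plus_outers n u M)"
  by (induction M) (auto simp: loewner_ge_one_one_mat loewner_ge_one_add_outer_mat)

lemma det_id_plus_outers_pos: "det (id_plus_outers n u M) > 0"
proof (induction M)
  case (Suc M)
  obtain q where "0 \<le> q" "q \<le> (\<Sum>i=0..<n. (u M i)\<^sup>2)"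
    "det (id_plus_outers n u M + outer_mat n (u M)) = det (id_plus_outers n u M) * (1 + q)"
    by (rule det_add_outer_mat[OF loewner_ge_one_id_plus_outers])
  with Suc show ?case by simp
qed simp

lemma det_id_plus_outers_growth:
  assumes "N \<le> M"
  shows "det (id_plus_outers n u N) \<le> det (id_plus_outers n u M)"
    and "det (id_plus_outers n u M)
         \<le> det (id_plus_outers n u N) * exp (\<Sum>k=N..<M. \<Sum>i=0..<n. (u k i)\<^sup>2)"
  using assms
proof (induction M rule: dec_induct)
  case (step M)
  let ?d = "\<lambda>M. det (id_plus_outers n u M)"
  obtain q where q: "0 \<le> q" "q \<le> (\<Sum>i=0..<n. (u M i)\<^sup>2)"
    "det (id_plus_outers n u M + outer_mat n (u M)) = ?d M * (1 + q)"
    by (rule det_add_outer_mat[OF loewner_ge_one_id_plus_outers])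
  have pos: "?d M > 0" by (rule det_id_plus_outers_pos)
  have "?d M \<le> ?d (Suc M)" using q pos by simp
  then show "?d N \<le> ?d (Suc M)" using step.IH(1) by linarith
  have "1 + q \<le> exp (\<Sum>i=0..<n. (u M i)\<^sup>2)"
    using exp_ge_add_one_self[of q] q(2) by (meson exp_le_cancel_iff order_trans)
  then have "?d (Suc M) \<le> ?d M * exp (\<Sum>i=0..<n. (u M i)\<^sup>2)"
    using q(3) pos by simp
  also have "\<dots> \<le> ?d N * exp (\<Sum>k=N..<M. \<Sum>i=0..<n. (u k i)\<^sup>2) * exp (\<Sum>i=0..<n. (u M i)\<^sup>2)"
    using step.IH(2) by (intro mult_right_mono) auto
  also have "\<dots> = ?d N * exp (\<Sum>k=N..<Suc M. \<Sum>i=0..<n. (u k i)\<^sup>2)"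
    using step.hyps by (simp add: exp_add mult.assoc)
  finally show "?d (Suc M) \<le> ?d N * exp (\<Sum>k=N..<Suc M. \<Sum>i=0..<n. (u k i)\<^sup>2)" .
qed simp_all

lemma det_id_plus_outers_eq_gram:
  "det (id_plus_outers n u N) = det (1\<^sub>m N + mat N N (\<lambda>(k, l). \<Sum>i<n. u k i * u l i))"
proof -
  define U where "U = mat n N (\<lambda>(i, k). u k i)"
  define W where "W = mat N n (\<lambda>(k, i). u k i)"
  have U: "U \<in> carrier_mat n N" and W: "W \<in> carrier_mat N n" by (auto simp: U_def W_def)
  have "id_plus_outers n u N = 1\<^sub>m n + U * W"
    using U W id_plus_outers_carrier[of n u N]
    by (intro eq_matI) (auto simp: index_id_plus_outers U_def W_def scalar_prod_def atLeast0LessThan)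
  moreover have "W * U = mat N N (\<lambda>(k, l). \<Sum>i<n. u k i * u l i)"
    by (intro eq_matI) (auto simp: U_def W_def scalar_prod_def atLeast0LessThan)
  ultimately show ?thesis using det_one_plus_mult_commute[OF U W] by simp
qed

lemma det_diagonal_mat: "det (mat N N (\<lambda>(k, l). if k = l then f k else 0)) = (\<Prod>k<N. f k)"
proof -
  have "det (mat N N (\<lambda>(k, l). if k = l then f k else 0))
      = prod_list (diag_mat (mat N N (\<lambda>(k, l). if k = l then f k else 0)))"
    by (rule det_upper_triangular) (auto simp: upper_triangular_def)
  also have "\<dots> = prod_list (map f [0..<N])"
    unfolding diag_mat_def by (intro arg_cong[where f = prod_list] map_cong) auto
  finally show ?thesis by (simp add: prod.distinct_set_conv_list[symmetric] atLeast0LessThan)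
qed

lemma tendsto_det:
  fixes A :: "'b \<Rightarrow> real mat"
  assumes A: "\<And>x. A x \<in> carrier_mat n n" and B: "B \<in> carrier_mat n n"
    and lim: "\<And>i j. i < n \<Longrightarrow> j < n \<Longrightarrow> ((\<lambda>x. A x $$ (i, j)) \<longlongrightarrow> B $$ (i, j)) F"
  shows "((\<lambda>x. det (A x)) \<longlongrightarrow> det B) F"
proof -
  have "((\<lambda>x. \<Sum>p\<in>{p. p permutes {0..<n}}. signof p * (\<Prod>i=0..<n. A x $$ (i, p i)))
        \<longlongrightarrow> (\<Sum>p\<in>{p. p permutes {0..<n}}. signof p * (\<Prod>i=0..<n. B $$ (i, p i)))) F"
  proof (intro tendsto_intros)
    fix p i assume "p \<in> {p. p permutes {0..<n}}" "i \<in> {0..<n}"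
    then show "((\<lambda>x. A x $$ (i, p i)) \<longlongrightarrow> B $$ (i, p i)) F"
      using lim by (auto dest: permutes_in_image)
  qed
  then show ?thesis by (simp add: det_def'[OF A] det_def'[OF B])
qed

lemma sum_atLeastLessThan_le_sums_tail:
  fixes f :: "nat \<Rightarrow> real"
  assumes "f sums s" "\<And>k. 0 \<le> f k" "N \<le> M"
  shows "(\<Sum>k=N..<M. f k) \<le> s - (\<Sum>k<N. f k)"
proof -
  have "(\<Sum>k<M. f k) = (\<Sum>k<N. f k) + (\<Sum>k=N..<M. f k)"
    using sum.atLeastLessThan_concat[of 0 N M f] assms(3) by (simp add: lessThan_atLeast0)
  moreover have "(\<Sum>k<M. f k) \<le> s"
    using sum_le_suminf[of f "{..<M}"] assms(1,2) by (simp add: sums_iff)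
  ultimately show ?thesis by simp
qed

text \<open>The exponent is the trace of the neglected tail of the series.\<close>
lemma det_outer_series_bounds:
  assumes P: "P \<in> carrier_mat n n"
    and sums: "\<And>i j. i < n \<Longrightarrow> j < n \<Longrightarrow>
      (\<lambda>k. u k i * u k j) sums (P $$ (i, j) - (if i = j then 1 else 0))"
  shows "det (id_plus_outers n u N) \<le> det P"
    and "det P \<le> det (id_plus_outers n u N) * exp (\<Sum>i=0..<n. P $$ (i, i) - 1 - (\<Sum>k<N. (u k i)\<^sup>2))"
proof -
  have lim: "(\<lambda>M. det (id_plus_outers n u M)) \<longlonglongrightarrow> det P"
  proof (rule tendsto_det[OF id_plus_outers_carrier P])
    fix i j assume ij: "i < n" "j < n"
    have "(\<lambda>M. (if i = j then 1 else 0) + (\<Sum>k<M. u k i * u k j))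
        \<longlonglongrightarrow> (if i = j then 1 else 0) + (P $$ (i, j) - (if i = j then 1 else 0))"
      using sums[OF ij] unfolding sums_def by (intro tendsto_add tendsto_const)
    then show "(\<lambda>M. id_plus_outers n u M $$ (i, j)) \<longlonglongrightarrow> P $$ (i, j)"
      using ij by (simp add: index_id_plus_outers)
  qed
  show "det (id_plus_outers n u N) \<le> det P"
    by (rule tendsto_lowerbound[OF lim])
      (use det_id_plus_outers_growth(1)[of N _ n u] in \<open>auto simp: eventually_sequentially\<close>)
  have tail: "(\<Sum>k=N..<M. \<Sum>i=0..<n. (u k i)\<^sup>2) \<le> (\<Sum>i=0..<n. P $$ (i, i) - 1 - (\<Sum>k<N. (u k i)\<^sup>2))"
    if "N \<le> M" for M
  proof -
    have "(\<lambda>k. (u k i)\<^sup>2) sums (P $$ (i, i) - 1)" if "i < n" for i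
      using sums[OF that that] by (simp add: power2_eq_square)
    then show ?thesis
      using \<open>N \<le> M\<close> by (subst sum.swap) (intro sum_mono sum_atLeastLessThan_le_sums_tail; simp)
  qed
  show "det P \<le> det (id_plus_outers n u N) * exp (\<Sum>i=0..<n. P $$ (i, i) - 1 - (\<Sum>k<N. (u k i)\<^sup>2))"
  proof (rule tendsto_upperbound[OF lim], unfold eventually_sequentially, intro exI allI impI)
    fix M assume M: "N \<le> M"
    have "det (id_plus_outers n u M)
        \<le> det (id_plus_outers n u N) * exp (\<Sum>k=N..<M. \<Sum>i=0..<n. (u k i)\<^sup>2)"
      by (rule det_id_plus_outers_growth(2)[OF M])
    also have "\<dots> \<le> det (id_plus_outers n u N) * exp (\<Sum>i=0..<n. P $$ (i, i) - 1 - (\<Sum>k<N. (u k i)\<^sup>2))"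
      using tail[OF M] det_id_plus_outers_pos[of n u N] by (intro mult_left_mono) auto
    finally show "det (id_plus_outers n u M)
      \<le> det (id_plus_outers n u N) * exp (\<Sum>i=0..<n. P $$ (i, i) - 1 - (\<Sum>k<N. (u k i)\<^sup>2))" .
  qed simp
qed

section \<open>Riemann sums\<close>

definition riemann_sum :: "real \<Rightarrow> nat \<Rightarrow> (real \<Rightarrow> real) \<Rightarrow> real" where
  "riemann_sum T n f = T / real n * (\<Sum>i<n. f (sample_time T n i))"

lemma sample_time_in_interval: "0 \<le> T \<Longrightarrow> i < n \<Longrightarrow> sample_time T n i \<in> {0..T}"
  by (auto simp: sample_time_def field_simps intro!: mult_left_mono)

lemma riemann_sum_diff: "riemann_sum T n (\<lambda>s. f s - g s) = riemann_sum T n f - riemann_sum T n g"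
  by (simp add: riemann_sum_def sum_subtractf right_diff_distrib)

lemma riemann_sum_abs_le:
  assumes "0 \<le> T" and bound: "\<And>s. s \<in> {0..T} \<Longrightarrow> \<bar>f s\<bar> \<le> e"
  shows "\<bar>riemann_sum T n f\<bar> \<le> T * e"
proof (cases "n = 0")
  case True
  have "0 \<le> e" using bound[of 0] \<open>0 \<le> T\<close> by force
  with True show ?thesis using \<open>0 \<le> T\<close> by (simp add: riemann_sum_def)
next
  case False
  have "\<bar>\<Sum>i<n. f (sample_time T n i)\<bar> \<le> (\<Sum>i<n. e)"
    using bound sample_time_in_interval[OF \<open>0 \<le> T\<close>] by (intro order_trans[OF sum_abs] sum_mono) auto
  have "\<bar>riemann_sum T n f\<bar> = T / n * \<bar>\<Sum>i<n. f (sample_time T n i)\<bar>"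
    using \<open>0 \<le> T\<close> by (simp add: riemann_sum_def abs_mult)
  also have "\<dots> \<le> T / n * (n * e)"
    using \<open>\<bar>\<Sum>i<n. f (sample_time T n i)\<bar> \<le> (\<Sum>i<n. e)\<close> \<open>0 \<le> T\<close>
    by (intro mult_left_mono) simp_all
  also have "\<dots> = T * e" using False by simp
  finally show ?thesis .
qed

lemma integral_cell_error:
  fixes f :: "real \<Rightarrow> real"
  assumes "0 \<le> h" "f integrable_on {a..a + h}" "\<And>x. x \<in> {a..a + h} \<Longrightarrow> \<bar>f x - f a\<bar> \<le> e"
  shows "\<bar>integral {a..a + h} f - h * f a\<bar> \<le> h * e"
proof -
  have "integral {a..a + h} (\<lambda>x. f x - f a) = integral {a..a + h} f - h * f a"
    using assms by (subst integral_diff) auto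
  moreover have "norm (integral {a..a + h} (\<lambda>x. f x - f a)) \<le> integral {a..a + h} (\<lambda>x. e)"
    using assms by (intro integral_norm_bound_integral integrable_diff) auto
  ultimately show ?thesis using assms(1) by simp
qed

lemma riemann_sum_error:
  fixes f :: "real \<Rightarrow> real"
  assumes T: "T > 0" and n: "n > 0" and f: "continuous_on {0..T} f"
    and modulus: "\<And>x y. x \<in> {0..T} \<Longrightarrow> y \<in> {0..T} \<Longrightarrow> \<bar>x - y\<bar> \<le> T / n \<Longrightarrow> \<bar>f x - f y\<bar> \<le> e"
  shows "\<bar>riemann_sum T n f - integral {0..T} f\<bar> \<le> T * e"
proof -
  define h where "h = T / n"
  have h: "h > 0" and nh: "real n * h = T" using T n by (simp_all add: h_def)
  have modulus_h: "\<bar>f x - f y\<bar> \<le> e" if "x \<in> {0..T}" "y \<in> {0..T}" "\<bar>x - y\<bar> \<le> h" for x y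
    using modulus that by (simp add: h_def)
  have "\<bar>h * (\<Sum>i<m. f (real i * h)) - integral {0..real m * h} f\<bar> \<le> real m * h * e"
    if "m \<le> n" for m
    using that
  proof (induction m)
    case (Suc m)
    have "real (Suc m) * h \<le> T" using Suc.prems h nh by (metis mult_right_mono of_nat_le_iff less_imp_le)
    have a0: "0 \<le> real m * h" using h by simp
    from \<open>real (Suc m) * h \<le> T\<close> have sub: "{0..m * h + h} \<subseteq> {0..T}" by (simp add: algebra_simps)
    have "integral {0..m * h} f + integral {m * h..m * h + h} f = integral {0..m * h + h} f"
      using h sub by (intro Henstock_Kurzweil_Integration.integral_combine
          integrable_continuous_interval continuous_on_subset[OF f]) auto
    moreover have "\<bar>integral {m * h..m * h + h} f - h * f (m * h)\<bar> \<le> h * e"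
    proof (intro integral_cell_error integrable_continuous_interval continuous_on_subset[OF f])
      have cell: "{m * h..m * h + h} \<subseteq> {0..T}" using a0 sub by auto
      then show "{m * h..m * h + h} \<subseteq> {0..T}" .
      show "\<bar>f x - f (m * h)\<bar> \<le> e" if "x \<in> {m * h..m * h + h}" for x
        using that h by (intro modulus_h subsetD[OF cell]) auto
    qed (use h in auto)
    ultimately show ?case
      using Suc by (simp add: algebra_simps)
  qed simp
  moreover have "riemann_sum T n f = h * (\<Sum>i<n. f (real i * h))"
    by (simp add: riemann_sum_def sample_time_def h_def)
  ultimately show ?thesis using nh by (metis order_refl)
qed

lemma continuous_on_slices:
  assumes "continuous_on (S \<times> S') (\<lambda>(s, t). F s t)"
  shows "s \<in> S \<Longrightarrow> continuous_on S' (F s)"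
    and "t \<in> S' \<Longrightarrow> continuous_on S (\<lambda>s. F s t)"
proof -
  have pairs: "continuous_on S' (\<lambda>t. (s, t))" "continuous_on S (\<lambda>s. (s, t))"
    by (intro continuous_intros)+
  show "continuous_on S' (F s)" if "s \<in> S"
    using continuous_on_compose2[OF assms pairs(1)] that by auto
  show "continuous_on S (\<lambda>s. F s t)" if "t \<in> S'"
    using continuous_on_compose2[OF assms pairs(2)] that by auto
qed

lemma uniform_limit_riemann_sum:
  fixes F :: "real \<Rightarrow> real \<Rightarrow> real"
  assumes T: "T > 0" and F: "continuous_on ({0..T} \<times> {0..T}) (\<lambda>(s, t). F s t)"
  shows "uniform_limit {0..T} (\<lambda>n s. riemann_sum T n (F s)) (\<lambda>s. integral {0..T} (F s)) sequentially"
proof (rule uniform_limitI)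
  fix r :: real assume r: "r > 0"
  have "uniformly_continuous_on ({0..T} \<times> {0..T}) (\<lambda>(s, t). F s t)"
    using F by (intro compact_uniformly_continuous compact_Times compact_Icc)
  then obtain d where d: "d > 0" and close: "\<And>x y. x \<in> {0..T} \<times> {0..T} \<Longrightarrow> y \<in> {0..T} \<times> {0..T} \<Longrightarrow>
      dist y x < d \<Longrightarrow> dist ((\<lambda>(s, t). F s t) y) ((\<lambda>(s, t). F s t) x) < r / (2 * T)"
    unfolding uniformly_continuous_on_def using r T by (metis divide_pos_pos mult_pos_pos zero_less_numeral)
  obtain N :: nat where N: "T / d < N" using reals_Archimedean2 by blast
  have "\<forall>s\<in>{0..T}. dist (riemann_sum T n (F s)) (integral {0..T} (F s)) < r" if n: "N < n" for n
  proof
    fix s :: real assume s: "s \<in> {0..T}"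
    have "T / n < d" using N n d by (simp add: field_simps) (smt (verit) of_nat_less_iff mult_strict_left_mono)
    then have "\<bar>riemann_sum T n (F s) - integral {0..T} (F s)\<bar> \<le> T * (r / (2 * T))"
      using close[of "(s, _)" "(s, _)"] s n
      by (intro riemann_sum_error T continuous_on_slices(1)[OF F s])
        (auto simp: dist_Pair_Pair dist_real_def less_imp_le)
    also have "\<dots> < r" using T r by simp
    finally show "dist (riemann_sum T n (F s)) (integral {0..T} (F s)) < r"
      by (simp add: dist_real_def)
  qed
  then show "\<forall>\<^sub>F n in sequentially. \<forall>s\<in>{0..T}. dist (riemann_sum T n (F s)) (integral {0..T} (F s)) < r"
    unfolding eventually_sequentially by (metis Suc_le_eq)
qed

lemma tendsto_riemann_sum:
  assumes T: "T > 0" and f: "continuous_on {0..T} f"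
  shows "(\<lambda>n. riemann_sum T n f) \<longlonglongrightarrow> integral {0..T} f"
proof -
  have "continuous_on ({0..T} \<times> {0..T}) (\<lambda>p. f (snd p))"
    by (rule continuous_on_compose2[OF f continuous_on_snd]) auto
  then have "continuous_on ({0..T} \<times> {0..T}) (\<lambda>(s::real, t). f t)"
    by (simp add: case_prod_beta)
  from tendsto_uniform_limitI[OF uniform_limit_riemann_sum[OF T this], of 0] T show ?thesis
    by simp
qed

lemma tendsto_riemann_sum_uniform_limit:
  assumes T: "T > 0" and lim: "uniform_limit {0..T} g f sequentially"
    and f: "continuous_on {0..T} f"
  shows "(\<lambda>n. riemann_sum T n (g n)) \<longlonglongrightarrow> integral {0..T} f"
proof -
  have "(\<lambda>n. riemann_sum T n (g n) - riemann_sum T n f) \<longlonglongrightarrow> 0"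
  proof (rule tendstoI)
    fix e :: real assume e: "e > 0"
    have "\<forall>\<^sub>F n in sequentially. \<forall>s\<in>{0..T}. dist (g n s) (f s) < e / (2 * T)"
      using lim T e by (simp add: uniform_limit_iff)
    then show "\<forall>\<^sub>F n in sequentially. dist (riemann_sum T n (g n) - riemann_sum T n f) 0 < e"
    proof eventually_elim
      case (elim n)
      then have "\<bar>riemann_sum T n (\<lambda>s. g n s - f s)\<bar> \<le> T * (e / (2 * T))"
        using T by (intro riemann_sum_abs_le) (auto simp: dist_real_def less_imp_le)
      also have "\<dots> < e" using T e by simp
      finally show ?case by (simp add: riemann_sum_diff)
    qed
  qed
  from tendsto_add[OF this tendsto_riemann_sum[OF T f]] show ?thesis by simp
qed

lemma tendsto_double_riemann_sum:
  fixes F :: "real \<Rightarrow> real \<Rightarrow> real"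
  assumes T: "T > 0" and F: "continuous_on ({0..T} \<times> {0..T}) (\<lambda>(s, t). F s t)"
  shows "(\<lambda>n. riemann_sum T n (\<lambda>s. riemann_sum T n (F s)))
           \<longlonglongrightarrow> integral {0..T} (\<lambda>s. integral {0..T} (F s))"
proof (rule tendsto_riemann_sum_uniform_limit[OF T uniform_limit_riemann_sum[OF T F]])
  have "continuous_on {0..T} (\<lambda>s. riemann_sum T n (F s))" for n
    unfolding riemann_sum_def using continuous_on_slices(2)[OF F] sample_time_in_interval T
    by (intro continuous_intros) auto
  then show "continuous_on {0..T} (\<lambda>s. integral {0..T} (F s))"
    by (intro uniform_limit_theorem[OF _ uniform_limit_riemann_sum[OF T F]]) auto
qed

lemma posdef_kernel_integral_nonneg:
  fixes R :: "real \<Rightarrow> real \<Rightarrow> real"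
  assumes T: "T > 0"
    and R_cont: "continuous_on ({0..T} \<times> {0..T}) (\<lambda>(s, t). R s t)"
    and R_posdef: "\<forall>(m::nat) (x::nat \<Rightarrow> real) (c::nat \<Rightarrow> real).
                     (\<forall>i<m. x i \<in> {0..T}) \<longrightarrow>
                     0 \<le> (\<Sum>i<m. \<Sum>j<m. c i * c j * R (x i) (x j))"
    and \<psi>: "continuous_on {0..T} \<psi>"
  shows "0 \<le> integral {0..T} (\<lambda>s. \<psi> s * integral {0..T} (\<lambda>t. R s t * \<psi> t))"
proof -
  define F where "F = (\<lambda>s t. \<psi> s * (R s t * \<psi> t))"
  have "continuous_on ({0..T} \<times> {0..T}) (\<lambda>(s, t). F s t)"
    unfolding F_def case_prod_beta
    by (intro continuous_intros continuous_on_compose2[OF \<psi>] R_cont[unfolded case_prod_beta]) auto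
  from tendsto_double_riemann_sum[OF T this]
  have "(\<lambda>n. riemann_sum T n (\<lambda>s. riemann_sum T n (F s)))
          \<longlonglongrightarrow> integral {0..T} (\<lambda>s. \<psi> s * integral {0..T} (\<lambda>t. R s t * \<psi> t))"
    by (simp add: F_def)
  moreover have "0 \<le> riemann_sum T n (\<lambda>s. riemann_sum T n (F s))" for n
  proof -
    let ?t = "sample_time T n" and ?c = "\<lambda>i. T / n * \<psi> (sample_time T n i)"
    have "0 \<le> (\<Sum>i<n. \<Sum>j<n. ?c i * ?c j * R (?t i) (?t j))"
      by (rule R_posdef[rule_format]) (use sample_time_in_interval T in auto)
    also have "\<dots> = riemann_sum T n (\<lambda>s. riemann_sum T n (F s))"
      by (simp add: riemann_sum_def F_def sum_distrib_left mult_ac)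
    finally show ?thesis .
  qed
  ultimately show ?thesis by (intro tendsto_lowerbound) auto
qed

section \<open>Mercer kernels and sampled covariance matrices\<close>

lemma LIMSEQ_squeeze_truncations:
  fixes x :: "nat \<Rightarrow> real" and lower gap :: "nat \<Rightarrow> nat \<Rightarrow> real"
  assumes lower: "\<And>N n. lower N n \<le> x n" and upper: "\<And>N n. x n \<le> lower N n + gap N n"
    and lower_lim: "\<And>N. (\<lambda>n. lower N n) \<longlonglongrightarrow> a N" and gap_lim: "\<And>N. (\<lambda>n. gap N n) \<longlonglongrightarrow> b N"
    and "a \<longlonglongrightarrow> S" and "b \<longlonglongrightarrow> 0"
  shows "x \<longlonglongrightarrow> S"
proof (rule tendstoI)
  fix r :: real assume r: "r > 0"
  have "\<forall>\<^sub>F N in sequentially. dist (a N) S < r / 4 \<and> dist (b N) 0 < r / 4"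
    using assms(5,6) r by (intro eventually_conj tendstoD) auto
  then obtain N where N: "dist (a N) S < r / 4" "dist (b N) 0 < r / 4"
    unfolding eventually_sequentially by blast
  have "\<forall>\<^sub>F n in sequentially. dist (lower N n) (a N) < r / 4 \<and> dist (gap N n) (b N) < r / 4"
    using lower_lim gap_lim r by (intro eventually_conj tendstoD) auto
  then show "\<forall>\<^sub>F n in sequentially. dist (x n) S < r"
  proof eventually_elim
    case (elim n)
    then have "\<bar>lower N n - a N\<bar> < r / 4" "\<bar>gap N n - b N\<bar> < r / 4"
      by (simp_all add: dist_real_def)
    moreover have "\<bar>a N - S\<bar> < r / 4" "\<bar>b N\<bar> < r / 4"
      using N by (simp_all add: dist_real_def)
    ultimately show ?case
      using lower[of N n] upper[of n N] unfolding dist_real_def abs_less_iff by linarith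
  qed
qed

locale mercer_kernel =
  fixes T :: real
    and R :: "real \<Rightarrow> real \<Rightarrow> real"
    and lam :: "nat \<Rightarrow> real"
    and phi :: "nat \<Rightarrow> real \<Rightarrow> real"
  assumes T_pos: "T > 0"
    and R_cont: "continuous_on ({0..T} \<times> {0..T}) (\<lambda>(s, t). R s t)"
    and R_posdef: "\<forall>(m::nat) (x::nat \<Rightarrow> real) (c::nat \<Rightarrow> real).
                     (\<forall>i<m. x i \<in> {0..T}) \<longrightarrow>
                     0 \<le> (\<Sum>i<m. \<Sum>j<m. c i * c j * R (x i) (x j))"
    and phi_cont: "\<And>k. continuous_on {0..T} (phi k)"
    and eigen: "\<And>k s. s \<in> {0..T} \<Longrightarrow> lam k * phi k s = integral {0..T} (\<lambda>t. R s t * phi k t)"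
    and orthonormal: "\<And>i j. integral {0..T} (\<lambda>t. phi i t * phi j t) = (if i = j then 1 else 0)"
    and mercer: "\<And>s t. s \<in> {0..T} \<Longrightarrow> t \<in> {0..T} \<Longrightarrow> (\<lambda>k. lam k * phi k s * phi k t) sums R s t"
begin

lemma lam_nonneg: "0 \<le> lam k"
proof -
  have "integral {0..T} (\<lambda>s. phi k s * integral {0..T} (\<lambda>t. R s t * phi k t))
      = integral {0..T} (\<lambda>s. lam k * (phi k s * phi k s))"
    by (intro integral_cong) (simp add: eigen[symmetric])
  also have "\<dots> = lam k" by (simp add: orthonormal)
  finally show ?thesis
    using posdef_kernel_integral_nonneg[OF T_pos R_cont R_posdef phi_cont[of k]] by simp
qed

lemma continuous_on_diagonal: "continuous_on {0..T} (\<lambda>s. R s s)"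
proof -
  have "continuous_on {0..T} (\<lambda>s. (\<lambda>(s, t). R s t) (s, s))"
    by (intro continuous_on_compose2[OF R_cont] continuous_intros) auto
  then show ?thesis by simp
qed

lemma integral_eigen_expansion: "integral {0..T} (\<lambda>s. \<Sum>k<N. lam k * (phi k s * phi k s)) = (\<Sum>k<N. lam k)"
  using phi_cont
  by (subst integral_sum)
    (auto simp: orthonormal intro!: integrable_continuous_interval continuous_on_mult continuous_on_const)

lemma lam_sums_trace: "lam sums integral {0..T} (\<lambda>s. R s s)"
proof -
  define f where "f = (\<lambda>N s. \<Sum>k<N. lam k * (phi k s * phi k s))"
  have f_cont: "continuous_on {0..T} (f N)" for N
    unfolding f_def using phi_cont by (intro continuous_intros) auto
  have f_sums: "(\<lambda>k. lam k * (phi k s * phi k s)) sums R s s" if "s \<in> {0..T}" for s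
    using mercer[OF that that] by (simp add: mult.assoc)
  have f_le: "f N s \<le> R s s" if "s \<in> {0..T}" for N s
  proof -
    have "f N s \<le> (\<Sum>k. lam k * (phi k s * phi k s))"
      unfolding f_def using f_sums[OF that] lam_nonneg
      by (intro sum_le_suminf) (auto simp: sums_iff)
    then show ?thesis using f_sums[OF that] by (simp add: sums_iff)
  qed
  have "(\<lambda>s. R s s) integrable_on {0..T} \<and> (\<lambda>N. integral {0..T} (f N)) \<longlonglongrightarrow> integral {0..T} (\<lambda>s. R s s)"
  proof (rule monotone_convergence_increasing)
    show "f N integrable_on {0..T}" for N by (rule integrable_continuous_interval[OF f_cont])
    show "f N s \<le> f (Suc N) s" for N s
      unfolding f_def using lam_nonneg[of N] by simp
    show "(\<lambda>N. f N s) \<longlonglongrightarrow> R s s" if "s \<in> {0..T}" for s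
      using f_sums[OF that] unfolding f_def sums_def .
    have "integral {0..T} (f N) \<le> integral {0..T} (\<lambda>s. R s s)" for N
      using f_le by (intro integral_le integrable_continuous_interval f_cont continuous_on_diagonal)
    moreover have "0 \<le> integral {0..T} (f N)" for N
      using lam_nonneg by (simp add: f_def integral_eigen_expansion sum_nonneg)
    ultimately have "\<bar>integral {0..T} (f N)\<bar> \<le> integral {0..T} (\<lambda>s. R s s)" for N
      by (simp add: abs_le_iff)
    then show "bounded (range (\<lambda>N. integral {0..T} (f N)))"
      by (intro boundedI) auto
  qed
  then show ?thesis unfolding sums_def f_def integral_eigen_expansion by simp
qed

lemma summable_ln_one_plus:
  assumes "0 \<le> c"
  shows "summable (\<lambda>k. ln (1 + c * lam k))"
proof (rule summable_comparison_test')
  show "summable (\<lambda>k. c * lam k)"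
    using lam_sums_trace by (intro summable_mult) (auto simp: sums_iff)
  show "norm (ln (1 + c * lam k)) \<le> c * lam k" for k
    using assms lam_nonneg[of k] ln_add_one_self_le_self[of "c * lam k"] by simp
qed

definition sample_vec :: "real \<Rightarrow> nat \<Rightarrow> nat \<Rightarrow> nat \<Rightarrow> real" where
  "sample_vec c n k i = sqrt (c * T / n * lam k) * phi k (sample_time T n i)"

definition diagonal_remainder :: "nat \<Rightarrow> real \<Rightarrow> real" where
  "diagonal_remainder N s = R s s - (\<Sum>k<N. lam k * (phi k s * phi k s))"

lemma sample_vec_mult:
  assumes "0 \<le> c"
  shows "sample_vec c n k i * sample_vec c n l j
    = c * T / n * sqrt (lam k * lam l) * (phi k (sample_time T n i) * phi l (sample_time T n j))"
proof -
  define a where "a = c * T / n"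
  have "0 \<le> a" using assms T_pos by (simp add: a_def)
  have "sqrt (a * lam k) * sqrt (a * lam l) = sqrt a * sqrt a * sqrt (lam k * lam l)"
    by (simp add: real_sqrt_mult mult_ac)
  also have "\<dots> = a * sqrt (lam k * lam l)" using \<open>0 \<le> a\<close> by simp
  finally show ?thesis by (simp add: sample_vec_def a_def mult_ac)
qed

lemma sampled_mat_outer_series:
  assumes "0 \<le> c" "i < n" "j < n"
  shows "(\<lambda>k. sample_vec c n k i * sample_vec c n k j)
    sums ((1\<^sub>m n + (c * T / n) \<cdot>\<^sub>m sample_cov R T n) $$ (i, j) - (if i = j then 1 else 0))"
proof -
  have "(\<lambda>k. c * T / n * (lam k * phi k (sample_time T n i) * phi k (sample_time T n j)))
      sums (c * T / n * R (sample_time T n i) (sample_time T n j))"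
    using assms T_pos by (intro sums_mult mercer sample_time_in_interval) auto
  then show ?thesis
    using assms lam_nonneg by (simp add: sample_vec_mult sample_cov_def mult_ac)
qed

lemma ln_det_sampled_bounds:
  assumes c: "0 \<le> c"
  shows "ln (det (id_plus_outers n (sample_vec c n) N))
           \<le> ln (det (1\<^sub>m n + (c * T / n) \<cdot>\<^sub>m sample_cov R T n))"
    and "ln (det (1\<^sub>m n + (c * T / n) \<cdot>\<^sub>m sample_cov R T n))
           \<le> ln (det (id_plus_outers n (sample_vec c n) N)) + c * riemann_sum T n (diagonal_remainder N)"
proof -
  let ?P = "1\<^sub>m n + (c * T / n) \<cdot>\<^sub>m sample_cov R T n" and ?Q = "id_plus_outers n (sample_vec c n) N"
  have P: "?P \<in> carrier_mat n n" by (simp add: sample_cov_def)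
  note bounds = det_outer_series_bounds[OF P sampled_mat_outer_series[OF c]]
  have Q_pos: "0 < det ?Q" by (rule det_id_plus_outers_pos)
  with bounds(1) have P_pos: "0 < det ?P" by (meson less_le_trans)
  show "ln (det ?Q) \<le> ln (det ?P)" using Q_pos P_pos bounds(1) by simp
  have "(\<Sum>i=0..<n. ?P $$ (i, i) - 1 - (\<Sum>k<N. (sample_vec c n k i)\<^sup>2))
      = (\<Sum>i<n. c * T / n * diagonal_remainder N (sample_time T n i))"
    using c lam_nonneg
    by (intro sum.cong) (auto simp: sample_cov_def diagonal_remainder_def power2_eq_square
        sample_vec_mult sum_distrib_left right_diff_distrib mult_ac)
  also have "\<dots> = c * riemann_sum T n (diagonal_remainder N)"
    by (simp add: riemann_sum_def sum_distrib_left mult_ac)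
  finally have "det ?P \<le> det ?Q * exp (c * riemann_sum T n (diagonal_remainder N))"
    using bounds(2)[of N] by simp
  then have "ln (det ?P) \<le> ln (det ?Q * exp (c * riemann_sum T n (diagonal_remainder N)))"
    using P_pos by simp
  also have "\<dots> = ln (det ?Q) + c * riemann_sum T n (diagonal_remainder N)"
    using Q_pos by (simp add: ln_mult)
  finally show "ln (det ?P) \<le> ln (det ?Q) + c * riemann_sum T n (diagonal_remainder N)" .
qed

lemma tendsto_ln_det_truncation:
  assumes c: "0 \<le> c"
  shows "(\<lambda>n. ln (det (id_plus_outers n (sample_vec c n) N))) \<longlonglongrightarrow> (\<Sum>k<N. ln (1 + c * lam k))"
proof -
  define D where "D = mat N N (\<lambda>(k, l). if k = l then 1 + c * lam k else 0)"
  have gram_lim: "(\<lambda>n. (1\<^sub>m N + mat N N (\<lambda>(k, l). \<Sum>i<n. sample_vec c n k i * sample_vec c n l i)) $$ (k, l))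
      \<longlonglongrightarrow> D $$ (k, l)" if "k < N" "l < N" for k l
  proof -
    have "(\<Sum>i<n. sample_vec c n k i * sample_vec c n l i)
        = c * sqrt (lam k * lam l) * riemann_sum T n (\<lambda>s. phi k s * phi l s)" for n
      using c by (simp add: sample_vec_mult riemann_sum_def sum_distrib_left mult_ac)
    moreover have "(\<lambda>n. riemann_sum T n (\<lambda>s. phi k s * phi l s)) \<longlonglongrightarrow> (if k = l then 1 else 0)"
      using tendsto_riemann_sum[OF T_pos, of "\<lambda>s. phi k s * phi l s"] phi_cont
      by (simp add: orthonormal continuous_on_mult)
    ultimately show ?thesis
      using that lam_nonneg[of k]
      by (auto simp: D_def intro!: tendsto_eq_intros)
  qed
  have "(\<lambda>n. det (id_plus_outers n (sample_vec c n) N)) \<longlonglongrightarrow> det D"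
    unfolding det_id_plus_outers_eq_gram by (rule tendsto_det[OF _ _ gram_lim]) (auto simp: D_def)
  moreover have "det D = (\<Prod>k<N. 1 + c * lam k)" by (simp add: D_def det_diagonal_mat)
  ultimately have lim: "(\<lambda>n. det (id_plus_outers n (sample_vec c n) N)) \<longlonglongrightarrow> (\<Prod>k<N. 1 + c * lam k)"
    by simp
  have pos: "0 < 1 + c * lam k" for k using c lam_nonneg[of k] by (simp add: add_pos_nonneg)
  then have "0 < (\<Prod>k<N. 1 + c * lam k)" by (intro prod_pos) auto
  then have "(\<lambda>n. ln (det (id_plus_outers n (sample_vec c n) N))) \<longlonglongrightarrow> ln (\<Prod>k<N. 1 + c * lam k)"
    by (intro tendsto_ln[OF lim]) linarith
  then show ?thesis using pos by (simp add: ln_prod less_imp_neq[symmetric])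
qed

lemma tendsto_riemann_sum_diagonal_remainder:
  "(\<lambda>n. riemann_sum T n (diagonal_remainder N)) \<longlonglongrightarrow> integral {0..T} (\<lambda>s. R s s) - (\<Sum>k<N. lam k)"
proof -
  have "continuous_on {0..T} (diagonal_remainder N)"
    unfolding diagonal_remainder_def using phi_cont continuous_on_diagonal
    by (intro continuous_intros) auto
  moreover have "integral {0..T} (diagonal_remainder N) = integral {0..T} (\<lambda>s. R s s) - (\<Sum>k<N. lam k)"
    unfolding diagonal_remainder_def integral_eigen_expansion[symmetric] using phi_cont
    by (intro integral_diff integrable_continuous_interval continuous_on_diagonal continuous_intros) auto
  ultimately show ?thesis using tendsto_riemann_sum[OF T_pos] by metis
qed


lemma tendsto_trace_minus_partial_sums:
  "(\<lambda>N. integral {0..T} (\<lambda>s. R s s) - (\<Sum>k<N. lam k)) \<longlonglongrightarrow> 0"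
  using tendsto_diff[OF tendsto_const[of "integral {0..T} (\<lambda>s. R s s)"] lam_sums_trace[unfolded sums_def]]
  by simp

lemma tendsto_ln_det_sampled_mat:
  assumes c: "0 \<le> c"
  shows "(\<lambda>n. ln (det (1\<^sub>m n + (c * T / n) \<cdot>\<^sub>m sample_cov R T n))) \<longlonglongrightarrow> (\<Sum>k. ln (1 + c * lam k))"
proof (rule LIMSEQ_squeeze_truncations)
  show "ln (det (id_plus_outers n (sample_vec c n) N)) \<le> ln (det (1\<^sub>m n + (c * T / n) \<cdot>\<^sub>m sample_cov R T n))"
    for N n by (rule ln_det_sampled_bounds(1)[OF c])
  show "ln (det (1\<^sub>m n + (c * T / n) \<cdot>\<^sub>m sample_cov R T n))
      \<le> ln (det (id_plus_outers n (sample_vec c n) N)) + c * riemann_sum T n (diagonal_remainder N)"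
    for N n by (rule ln_det_sampled_bounds(2)[OF c])
  show "(\<lambda>n. c * riemann_sum T n (diagonal_remainder N))
      \<longlonglongrightarrow> c * (integral {0..T} (\<lambda>s. R s s) - (\<Sum>k<N. lam k))" for N
    by (intro tendsto_mult_left tendsto_riemann_sum_diagonal_remainder)
  show "(\<lambda>N. c * (integral {0..T} (\<lambda>s. R s s) - (\<Sum>k<N. lam k))) \<longlonglongrightarrow> 0"
    by (rule tendsto_mult_right_zero[OF tendsto_trace_minus_partial_sums])
  show "(\<lambda>N. \<Sum>k<N. ln (1 + c * lam k)) \<longlonglongrightarrow> (\<Sum>k. ln (1 + c * lam k))"
    using summable_ln_one_plus[OF c] by (rule summable_LIMSEQ)
qed (rule tendsto_ln_det_truncation[OF c])
end

theorem theorem1: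
  fixes T n0 :: real
    and R :: "real \<Rightarrow> real \<Rightarrow> real"
    and lam :: "nat \<Rightarrow> real"
    and phi :: "nat \<Rightarrow> real \<Rightarrow> real"
  assumes T_pos: "T > 0"
    and n0_pos: "n0 > 0"
    and R_cont: "continuous_on ({0..T} \<times> {0..T}) (\<lambda>(s, t). R s t)"
    and R_sym: "\<forall>s\<in>{0..T}. \<forall>t\<in>{0..T}. R s t = R t s"
    and R_posdef: "\<forall>(m::nat) (x::nat \<Rightarrow> real) (c::nat \<Rightarrow> real).
                     (\<forall>i<m. x i \<in> {0..T}) \<longrightarrow>
                     0 \<le> (\<Sum>i<m. \<Sum>j<m. c i * c j * R (x i) (x j))"
    and phi_cont: "\<forall>k. continuous_on {0..T} (phi k)"
    and eigen: "\<forall>k. \<forall>s\<in>{0..T}. lam k * phi k s = integral {0..T} (\<lambda>t. R s t * phi k t)"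
    and orthonormal: "\<forall>i j. integral {0..T} (\<lambda>t. phi i t * phi j t) = (if i = j then 1 else 0)"
    and mercer: "\<forall>s\<in>{0..T}. \<forall>t\<in>{0..T}. (\<lambda>k. lam k * phi k s * phi k t) sums R s t"
  shows "summable (\<lambda>k. ln (1 + lam k / (n0 / 2)))
         \<and> (\<lambda>n. sampled_MI R T n0 n) \<longlonglongrightarrow> 1/2 * (\<Sum>k. ln (1 + lam k / (n0 / 2)))"
proof -
  interpret mercer_kernel T R lam phi
    using T_pos R_cont R_posdef phi_cont eigen orthonormal mercer by unfold_locales auto
  define c where "c = 2 / n0"
  have c: "0 \<le> c" and scaled: "\<And>k. lam k / (n0 / 2) = c * lam k"
    using n0_pos by (simp_all add: c_def)
  have MI: "sampled_MI R T n0 n = 1/2 * ln (det (1\<^sub>m n + (c * T / n) \<cdot>\<^sub>m sample_cov R T n))" for n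
    by (simp add: sampled_MI_def c_def mult.commute)
  have "(\<lambda>n. sampled_MI R T n0 n) \<longlonglongrightarrow> 1/2 * (\<Sum>k. ln (1 + c * lam k))"
    unfolding MI by (rule tendsto_mult_left[OF tendsto_ln_det_sampled_mat[OF c]])
  with summable_ln_one_plus[OF c] show ?thesis
    unfolding scaled by blast
qed

end
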